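(* Let $(X,\sigma,\tau)$ be a separable, chronologically dense Lorentzian metric space satisfying the S-property. Then $\overline{\tau}:\overline{X}\times\overline{X}\to[0,\infty]$ is lower semicontinuous with respect to the chronological topology $\sigma_{chr}$ of $\overline X$ (product topology on $\overline X\times\overline X$).
   Context: A Lorentzian metric space $(X,\sigma,\tau)$ is a topological space with $\tau:X\times X\to[0,\infty]$ lower semicontinuous and satisfying $\tau(x,z)\geq\tau(x,y)+\tau(y,z)$ whenever $\tau(x,y),\tau(y,z)>0$. Write $x\ll y$ iff $\tau(x,y)>0$, $I^+(x)=\{y:x\ll y\}$, $I^-(x)=\{y:y\ll x\}$, $I^\pm[A]=\bigcup_{a\in A}I^\pm(a)$. Future (resp. past) chain: $x_n\ll x_{n+1}$ (resp. $x_{n+1}\ll x_n$) for all $n$. Separable: there is a countable $S$ with $x\ll y\Rightarrow\exists s\in S$, $x\ll s\ll y$. Chronologically dense: every $x$ with $I^-(x)\neq\emptyset$ (resp. $I^+(x)\neq\emptyset$) is the $\sigma$-limit of a future (resp. past) chain. Past set: $P=I^-[P]$; $\downarrow S=I^-[\{p:p\ll q\ \forall q\in S\}]$; IP: past set not the union of two proper past subsets; PIP: IP of the form $I^-(p)$; future sets, $\uparrow S$, IF, PIF dually. For nonempty IP $P$ and IF $F$, $P\sim_S F$ iff $P$ is a maximal IP in $\downarrow F$ and $F$ a maximal IF in $\uparrow P$; $P\sim_S\emptyset$ (resp. $\emptyset\sim_S F$) if the nonempty $P$ (resp. $F$) is S-related to no nonempty IF (resp. IP). S-property: for every $x$, $I^-(x)\sim_S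 I^+(x)$, and no PIF other than $I^+(x)$ (resp. PIP other than $I^-(x)$) is S-related to $I^-(x)$ (resp. $I^+(x)$). c-completion $\overline X=\{(P,F):P\sim_S F\}$. For a sequence $\{(P_n,F_n)\}$ in $\overline X$, $(P,F)\in L(\{(P_n,F_n)\})$ iff ($P\neq\emptyset\Rightarrow P\subset LI(P_n)$ and $P$ is a maximal IP in $LS(P_n)$) and ($F\neq\emptyset\Rightarrow F\subset LI(F_n)$ and $F$ is a maximal IF in $LS(F_n)$), where $LI(A_n)=\bigcup_n\bigcap_{k\ge n}A_k$, $LS(A_n)=\bigcap_n\bigcup_{k\ge n}A_k$. $\sigma_{chr}$: $C\subset\overline X$ is closed iff $L(s)\subset C$ for every sequence $s$ in $C$. $\overline\tau((P,F),(P',F'))=0$ if $F=\emptyset$ or $P'=\emptyset$, and otherwise $\lim_n\tau(q_n,p'_n)$ for any past chain $\{q_n\}$ with $I^+[\{q_n\}]=F$ and future chain $\{p'_n\}$ with $I^-[\{p'_n\}]=P'$ (well defined). *)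

theory Defs
  imports "HOL-Analysis.Analysis"
begin

definition lsc_on :: "'b topology \<Rightarrow> ('b \<Rightarrow> ennreal) \<Rightarrow> bool" where
  "lsc_on T f \<longleftrightarrow> (\<forall>t. openin T {z \<in> topspace T. t < f z})"

definition lorentzian_metric_space :: "'a topology \<Rightarrow> ('a \<Rightarrow> 'a \<Rightarrow> ennreal) \<Rightarrow> bool" where
  "lorentzian_metric_space \<sigma> \<tau> \<longleftrightarrow>
     topspace \<sigma> = UNIV \<and>
     lsc_on (prod_topology \<sigma> \<sigma>) (\<lambda>(x, y). \<tau> x y) \<and>
     (\<forall>x y z. \<tau> x y > 0 \<and> \<tau> y z > 0 \<longrightarrow> \<tau> x z \<ge> \<tau> x y + \<tau> y z)"

definition chr :: "('a \<Rightarrow> 'a \<Rightarrow> ennreal) \<Rightarrow> 'a \<Rightarrow> 'a \<Rightarrow> bool" where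
  "chr \<tau> x y \<longleftrightarrow> \<tau> x y > 0"

definition Ifut :: "('a \<Rightarrow> 'a \<Rightarrow> ennreal) \<Rightarrow> 'a \<Rightarrow> 'a set" where
  "Ifut \<tau> x = {y. chr \<tau> x y}"

definition Ipast :: "('a \<Rightarrow> 'a \<Rightarrow> ennreal) \<Rightarrow> 'a \<Rightarrow> 'a set" where
  "Ipast \<tau> x = {y. chr \<tau> y x}"

definition IfutS :: "('a \<Rightarrow> 'a \<Rightarrow> ennreal) \<Rightarrow> 'a set \<Rightarrow> 'a set" where
  "IfutS \<tau> A = (\<Union>a\<in>A. Ifut \<tau> a)"

definition IpastS :: "('a \<Rightarrow> 'a \<Rightarrow> ennreal) \<Rightarrow> 'a set \<Rightarrow> 'a set" where
  "IpastS \<tau> A = (\<Union>a\<in>A. Ipast \<tau> a)"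

definition future_chain :: "('a \<Rightarrow> 'a \<Rightarrow> ennreal) \<Rightarrow> (nat \<Rightarrow> 'a) \<Rightarrow> bool" where
  "future_chain \<tau> x \<longleftrightarrow> (\<forall>n. chr \<tau> (x n) (x (Suc n)))"

definition past_chain :: "('a \<Rightarrow> 'a \<Rightarrow> ennreal) \<Rightarrow> (nat \<Rightarrow> 'a) \<Rightarrow> bool" where
  "past_chain \<tau> x \<longleftrightarrow> (\<forall>n. chr \<tau> (x (Suc n)) (x n))"

definition separable_lms :: "('a \<Rightarrow> 'a \<Rightarrow> ennreal) \<Rightarrow> bool" where
  "separable_lms \<tau> \<longleftrightarrow>
     (\<exists>S. countable S \<and> (\<forall>x y. chr \<tau> x y \<longrightarrow> (\<exists>s\<in>S. chr \<tau> x s \<and> chr \<tau> s y)))"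

definition chronologically_dense :: "'a topology \<Rightarrow> ('a \<Rightarrow> 'a \<Rightarrow> ennreal) \<Rightarrow> bool" where
  "chronologically_dense \<sigma> \<tau> \<longleftrightarrow>
     (\<forall>x. Ipast \<tau> x \<noteq> {} \<longrightarrow>
        (\<exists>s. future_chain \<tau> s \<and> limitin \<sigma> s x sequentially)) \<and>
     (\<forall>x. Ifut \<tau> x \<noteq> {} \<longrightarrow>
        (\<exists>s. past_chain \<tau> s \<and> limitin \<sigma> s x sequentially))"

definition past_set :: "('a \<Rightarrow> 'a \<Rightarrow> ennreal) \<Rightarrow> 'a set \<Rightarrow> bool" where
  "past_set \<tau> P \<longleftrightarrow> P = IpastS \<tau> P"

definition future_set :: "('a \<Rightarrow> 'a \<Rightarrow> ennreal) \<Rightarrow> 'a set \<Rightarrow> bool" where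
  "future_set \<tau> F \<longleftrightarrow> F = IfutS \<tau> F"

definition IP :: "('a \<Rightarrow> 'a \<Rightarrow> ennreal) \<Rightarrow> 'a set \<Rightarrow> bool" where
  "IP \<tau> P \<longleftrightarrow> past_set \<tau> P \<and> P \<noteq> {} \<and>
     \<not> (\<exists>A B. past_set \<tau> A \<and> past_set \<tau> B \<and> A \<subset> P \<and> B \<subset> P \<and> P = A \<union> B)"

definition IF :: "('a \<Rightarrow> 'a \<Rightarrow> ennreal) \<Rightarrow> 'a set \<Rightarrow> bool" where
  "IF \<tau> F \<longleftrightarrow> future_set \<tau> F \<and> F \<noteq> {} \<and>
     \<not> (\<exists>A B. future_set \<tau> A \<and> future_set \<tau> B \<and> A \<subset> F \<and> B \<subset> F \<and> F = A \<union> B)"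

definition PIP :: "('a \<Rightarrow> 'a \<Rightarrow> ennreal) \<Rightarrow> 'a set \<Rightarrow> bool" where
  "PIP \<tau> P \<longleftrightarrow> IP \<tau> P \<and> (\<exists>p. P = Ipast \<tau> p)"

definition PIF :: "('a \<Rightarrow> 'a \<Rightarrow> ennreal) \<Rightarrow> 'a set \<Rightarrow> bool" where
  "PIF \<tau> F \<longleftrightarrow> IF \<tau> F \<and> (\<exists>p. F = Ifut \<tau> p)"

definition down :: "('a \<Rightarrow> 'a \<Rightarrow> ennreal) \<Rightarrow> 'a set \<Rightarrow> 'a set" where
  "down \<tau> S = IpastS \<tau> {p. \<forall>q\<in>S. chr \<tau> p q}"

definition up :: "('a \<Rightarrow> 'a \<Rightarrow> ennreal) \<Rightarrow> 'a set \<Rightarrow> 'a set" where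
  "up \<tau> S = IfutS \<tau> {p. \<forall>q\<in>S. chr \<tau> q p}"

definition maximal_IP_in :: "('a \<Rightarrow> 'a \<Rightarrow> ennreal) \<Rightarrow> 'a set \<Rightarrow> 'a set \<Rightarrow> bool" where
  "maximal_IP_in \<tau> P A \<longleftrightarrow> IP \<tau> P \<and> P \<subseteq> A \<and>
     (\<forall>P'. IP \<tau> P' \<and> P \<subseteq> P' \<and> P' \<subseteq> A \<longrightarrow> P' = P)"

definition maximal_IF_in :: "('a \<Rightarrow> 'a \<Rightarrow> ennreal) \<Rightarrow> 'a set \<Rightarrow> 'a set \<Rightarrow> bool" where
  "maximal_IF_in \<tau> F A \<longleftrightarrow> IF \<tau> F \<and> F \<subseteq> A \<and>
     (\<forall>F'. IF \<tau> F' \<and> F \<subseteq> F' \<and> F' \<subseteq> A \<longrightarrow> F' = F)"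

definition S_rel_ne :: "('a \<Rightarrow> 'a \<Rightarrow> ennreal) \<Rightarrow> 'a set \<Rightarrow> 'a set \<Rightarrow> bool" where
  "S_rel_ne \<tau> P F \<longleftrightarrow> P \<noteq> {} \<and> F \<noteq> {} \<and> IP \<tau> P \<and> IF \<tau> F \<and>
     maximal_IP_in \<tau> P (down \<tau> F) \<and> maximal_IF_in \<tau> F (up \<tau> P)"

definition S_rel :: "('a \<Rightarrow> 'a \<Rightarrow> ennreal) \<Rightarrow> 'a set \<Rightarrow> 'a set \<Rightarrow> bool" where
  "S_rel \<tau> P F \<longleftrightarrow>
     S_rel_ne \<tau> P F \<or>
     (P \<noteq> {} \<and> F = {} \<and> IP \<tau> P \<and> \<not> (\<exists>F'. S_rel_ne \<tau> P F')) \<or>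
     (P = {} \<and> F \<noteq> {} \<and> IF \<tau> F \<and> \<not> (\<exists>P'. S_rel_ne \<tau> P' F))"

definition S_property :: "('a \<Rightarrow> 'a \<Rightarrow> ennreal) \<Rightarrow> bool" where
  "S_property \<tau> \<longleftrightarrow>
     (\<forall>x. S_rel \<tau> (Ipast \<tau> x) (Ifut \<tau> x) \<and>
          (\<forall>F. PIF \<tau> F \<and> S_rel \<tau> (Ipast \<tau> x) F \<longrightarrow> F = Ifut \<tau> x) \<and>
          (\<forall>P. PIP \<tau> P \<and> S_rel \<tau> P (Ifut \<tau> x) \<longrightarrow> P = Ipast \<tau> x))"

definition c_completion :: "('a \<Rightarrow> 'a \<Rightarrow> ennreal) \<Rightarrow> ('a set \<times> 'a set) set" where
  "c_completion \<tau> = {(P, F). S_rel \<tau> P F}"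

definition LI :: "(nat \<Rightarrow> 'a set) \<Rightarrow> 'a set" where
  "LI A = (\<Union>n. \<Inter>k\<in>{n..}. A k)"

definition LS :: "(nat \<Rightarrow> 'a set) \<Rightarrow> 'a set" where
  "LS A = (\<Inter>n. \<Union>k\<in>{n..}. A k)"

definition Lchr :: "('a \<Rightarrow> 'a \<Rightarrow> ennreal) \<Rightarrow> (nat \<Rightarrow> 'a set \<times> 'a set) \<Rightarrow> ('a set \<times> 'a set) set" where
  "Lchr \<tau> s = {(P, F) \<in> c_completion \<tau>.
      (P \<noteq> {} \<longrightarrow> P \<subseteq> LI (\<lambda>n. fst (s n)) \<and> maximal_IP_in \<tau> P (LS (\<lambda>n. fst (s n)))) \<and>
      (F \<noteq> {} \<longrightarrow> F \<subseteq> LI (\<lambda>n. snd (s n)) \<and> maximal_IF_in \<tau> F (LS (\<lambda>n. snd (s n))))}"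

definition chr_closed :: "('a \<Rightarrow> 'a \<Rightarrow> ennreal) \<Rightarrow> ('a set \<times> 'a set) set \<Rightarrow> bool" where
  "chr_closed \<tau> C \<longleftrightarrow> C \<subseteq> c_completion \<tau> \<and> (\<forall>s. (\<forall>n. s n \<in> C) \<longrightarrow> Lchr \<tau> s \<subseteq> C)"

definition sigma_chr :: "('a \<Rightarrow> 'a \<Rightarrow> ennreal) \<Rightarrow> ('a set \<times> 'a set) topology" where
  "sigma_chr \<tau> = topology (\<lambda>U. U \<subseteq> c_completion \<tau> \<and> chr_closed \<tau> (c_completion \<tau> - U))"

definition tau_bar :: "('a \<Rightarrow> 'a \<Rightarrow> ennreal) \<Rightarrow> ('a set \<times> 'a set) \<Rightarrow> ('a set \<times> 'a set) \<Rightarrow> ennreal" where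
  "tau_bar \<tau> PF PF' =
     (let F = snd PF; P' = fst PF' in
      if F = {} \<or> P' = {} then 0
      else (let q = (SOME q. past_chain \<tau> q \<and> IfutS \<tau> (range q) = F);
                p = (SOME p. future_chain \<tau> p \<and> IpastS \<tau> (range p) = P')
            in lim (\<lambda>n. \<tau> (q n) (p n))))"

end

theory Submission
  imports Defs
begin

text \<open>
  Every IF \<open>F\<close> is generated by a past chain \<open>q\<close> and every IP \<open>P'\<close> by a future chain \<open>p\<close>:
  separability gives a countable dense subset of \<open>F\<close>, and indecomposability makes \<open>F\<close>
  directed to the past, so one can descend along the enumeration.  By the reverse triangle
  inequality \<open>\<tau> (q n) (p n)\<close> increases, hence \<open>tau_bar \<tau> (P,F) (P',F')\<close> is its supremum, and
  \<open>t < tau_bar \<tau> (P,F) (P',F')\<close> holds iff \<open>t < \<tau> a b\<close> for some \<open>a \<in> F\<close>, \<open>b \<in> P'\<close>.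
  The sets \<open>{(P,F). a \<in> F}\<close> and \<open>{(P,F). b \<in> P}\<close> are open for \<open>sigma_chr \<tau>\<close>, because the IPs
  and IFs of a limit lie in the lower limits \<open>LI\<close> of the sequence; so every superlevel set of
  \<open>tau_bar \<tau>\<close> is a union of open boxes.
\<close>

section \<open>The chronological topology\<close>

lemma LI_subseq:
  assumes "strict_mono r"
  shows "LI A \<subseteq> LI (\<lambda>n. A (r n))"
proof
  fix x assume "x \<in> LI A"
  then obtain m where "\<forall>k\<ge>m. x \<in> A k"
    unfolding LI_def by auto
  then have "\<forall>k\<ge>m. x \<in> A (r k)"
    using seq_suble[OF assms] le_trans by blast
  then show "x \<in> LI (\<lambda>n. A (r n))"
    unfolding LI_def by auto
qed

lemma LS_subseq:
  assumes "strict_mono r"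
  shows "LS (\<lambda>n. A (r n)) \<subseteq> LS A"
proof
  fix x assume "x \<in> LS (\<lambda>n. A (r n))"
  then have "\<exists>k\<ge>n. x \<in> A (r k)" for n
    unfolding LS_def by auto
  then have "\<exists>k\<ge>n. x \<in> A k" for n
    using seq_suble[OF assms] le_trans by blast
  then show "x \<in> LS A"
    unfolding LS_def by auto
qed

lemma LI_subset_LS: "LI A \<subseteq> LS A"
  unfolding LI_def LS_def by (auto intro: max.cobounded1 max.cobounded2)

lemma maximal_IP_in_subset:
  "maximal_IP_in \<tau> P A \<Longrightarrow> P \<subseteq> B \<Longrightarrow> B \<subseteq> A \<Longrightarrow> maximal_IP_in \<tau> P B"
  unfolding maximal_IP_in_def by blast

lemma maximal_IF_in_subset:
  "maximal_IF_in \<tau> F A \<Longrightarrow> F \<subseteq> B \<Longrightarrow> B \<subseteq> A \<Longrightarrow> maximal_IF_in \<tau> F B"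
  unfolding maximal_IF_in_def by blast

lemma Lchr_subset_c_completion: "Lchr \<tau> s \<subseteq> c_completion \<tau>"
  unfolding Lchr_def by blast

lemma Lchr_subseq:
  assumes r: "strict_mono r"
  shows "Lchr \<tau> s \<subseteq> Lchr \<tau> (s \<circ> r)"
proof -
  have IP: "P \<subseteq> LI (\<lambda>n. A (r n)) \<and> maximal_IP_in \<tau> P (LS (\<lambda>n. A (r n)))"
    if "P \<subseteq> LI A" "maximal_IP_in \<tau> P (LS A)" for P A
    using that LI_subseq[OF r, of A] LS_subseq[OF r, of A] LI_subset_LS[of "\<lambda>n. A (r n)"]
    by (meson maximal_IP_in_subset order_trans)
  have IF: "F \<subseteq> LI (\<lambda>n. A (r n)) \<and> maximal_IF_in \<tau> F (LS (\<lambda>n. A (r n)))"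
    if "F \<subseteq> LI A" "maximal_IF_in \<tau> F (LS A)" for F A
    using that LI_subseq[OF r, of A] LS_subseq[OF r, of A] LI_subset_LS[of "\<lambda>n. A (r n)"]
    by (meson maximal_IF_in_subset order_trans)
  show ?thesis
    unfolding Lchr_def comp_def
    using IP[of _ "\<lambda>n. fst (s n)"] IF[of _ "\<lambda>n. snd (s n)"] by auto
qed

lemma Lchr_subset_if_frequently_in:
  fixes s :: "nat \<Rightarrow> 'a set \<times> 'a set"
  assumes C: "chr_closed \<tau> C" and frequently: "infinite {n. s n \<in> C}"
  shows "Lchr \<tau> s \<subseteq> C"
proof -
  obtain r :: "nat \<Rightarrow> nat" where r: "strict_mono r" "\<forall>n. r n \<in> {n. s n \<in> C}"
    using infinite_enumerate[OF frequently] by blast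
  then have "Lchr \<tau> (s \<circ> r) \<subseteq> C"
    using C unfolding chr_closed_def by simp
  then show ?thesis
    using Lchr_subseq[OF r(1)] by blast
qed

text \<open>A sequence in \<open>C1 \<union> C2\<close> has a subsequence in one of them, and limits of a sequence
  are limits of its subsequences.\<close>

lemma chr_closed_Un:
  assumes C1: "chr_closed \<tau> C1" and C2: "chr_closed \<tau> C2"
  shows "chr_closed \<tau> (C1 \<union> C2)"
  unfolding chr_closed_def
proof (intro conjI allI impI)
  show "C1 \<union> C2 \<subseteq> c_completion \<tau>"
    using C1 C2 unfolding chr_closed_def by blast
  fix s :: "nat \<Rightarrow> 'a set \<times> 'a set"
  assume "\<forall>n. s n \<in> C1 \<union> C2"
  then have "{n. s n \<in> C1} \<union> {n. s n \<in> C2} = UNIV"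
    by blast
  then have "infinite {n. s n \<in> C1} \<or> infinite {n. s n \<in> C2}"
    by (metis finite_Un infinite_UNIV_nat)
  then show "Lchr \<tau> s \<subseteq> C1 \<union> C2"
    using Lchr_subset_if_frequently_in[OF C1] Lchr_subset_if_frequently_in[OF C2] by blast
qed

lemma chr_closed_INT:
  fixes C :: "'i \<Rightarrow> ('a set \<times> 'a set) set"
  assumes closed: "\<And>i. i \<in> I \<Longrightarrow> chr_closed \<tau> (C i)"
  shows "chr_closed \<tau> (c_completion \<tau> \<inter> (\<Inter>i\<in>I. C i))"
  unfolding chr_closed_def
proof (intro conjI allI impI)
  fix s :: "nat \<Rightarrow> 'a set \<times> 'a set"
  assume s: "\<forall>n. s n \<in> c_completion \<tau> \<inter> (\<Inter>i\<in>I. C i)"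
  have "Lchr \<tau> s \<subseteq> C i" if i: "i \<in> I" for i
  proof -
    have "\<forall>n. s n \<in> C i"
      using s i by simp
    then show ?thesis
      using closed[OF i] unfolding chr_closed_def by simp
  qed
  then show "Lchr \<tau> s \<subseteq> c_completion \<tau> \<inter> (\<Inter>i\<in>I. C i)"
    using Lchr_subset_c_completion by blast
qed simp

lemma openin_sigma_chr:
  "openin (sigma_chr \<tau>) U \<longleftrightarrow> U \<subseteq> c_completion \<tau> \<and> chr_closed \<tau> (c_completion \<tau> - U)"
proof -
  let ?X = "c_completion \<tau>"
  have top: "istopology (\<lambda>U. U \<subseteq> ?X \<and> chr_closed \<tau> (?X - U))"
    unfolding istopology_def
  proof (intro conjI[of "\<forall>S T. _ S T"] allI impI)
    fix S T
    assume S: "S \<subseteq> ?X \<and> chr_closed \<tau> (?X - S)" and T: "T \<subseteq> ?X \<and> chr_closed \<tau> (?X - T)"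
    have "?X - S \<inter> T = (?X - S) \<union> (?X - T)"
      by blast
    then show "S \<inter> T \<subseteq> ?X \<and> chr_closed \<tau> (?X - S \<inter> T)"
      using S T chr_closed_Un[of \<tau> "?X - S" "?X - T"] by (simp add: le_infI1)
  next
    fix K
    assume K: "\<forall>U\<in>K. U \<subseteq> ?X \<and> chr_closed \<tau> (?X - U)"
    have "?X - \<Union>K = ?X \<inter> (\<Inter>U\<in>K. ?X - U)"
      by blast
    then show "\<Union>K \<subseteq> ?X \<and> chr_closed \<tau> (?X - \<Union>K)"
      using K chr_closed_INT[where I=K and C="\<lambda>U. ?X - U"] by (simp add: Sup_le_iff)
  qed
  show ?thesis
    unfolding sigma_chr_def topology_inverse'[OF top] ..
qed

lemma topspace_sigma_chr: "topspace (sigma_chr \<tau>) = c_completion \<tau>"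
proof (rule subset_antisym)
  show "topspace (sigma_chr \<tau>) \<subseteq> c_completion \<tau>"
    using openin_sigma_chr openin_topspace by blast
  have "openin (sigma_chr \<tau>) (c_completion \<tau>)"
    unfolding openin_sigma_chr chr_closed_def by simp
  then show "c_completion \<tau> \<subseteq> topspace (sigma_chr \<tau>)"
    by (rule openin_subset)
qed

lemma fst_Lchr_subset_LI: "z \<in> Lchr \<tau> s \<Longrightarrow> fst z \<subseteq> LI (\<lambda>n. fst (s n))"
  unfolding Lchr_def by auto

lemma snd_Lchr_subset_LI: "z \<in> Lchr \<tau> s \<Longrightarrow> snd z \<subseteq> LI (\<lambda>n. snd (s n))"
  unfolding Lchr_def by auto

lemma openin_sigma_chr_mem:
  fixes g :: "'a set \<times> 'a set \<Rightarrow> 'a set"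
  assumes g: "\<And>s z. z \<in> Lchr \<tau> s \<Longrightarrow> g z \<subseteq> LI (\<lambda>n. g (s n))"
  shows "openin (sigma_chr \<tau>) {z \<in> c_completion \<tau>. a \<in> g z}"
  unfolding openin_sigma_chr chr_closed_def
proof (intro conjI allI impI subsetI)
  fix s :: "nat \<Rightarrow> 'a set \<times> 'a set" and z
  assume s: "\<forall>n. s n \<in> c_completion \<tau> - {z \<in> c_completion \<tau>. a \<in> g z}"
    and z: "z \<in> Lchr \<tau> s"
  have "a \<notin> g z"
  proof
    assume "a \<in> g z"
    then obtain n where "a \<in> g (s n)"
      using g[OF z] unfolding LI_def by blast
    then show False
      using s by blast
  qed
  then show "z \<in> c_completion \<tau> - {z \<in> c_completion \<tau>. a \<in> g z}"
    using z Lchr_subset_c_completion by blast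
qed auto

lemma openin_sigma_chr_fst_mem: "openin (sigma_chr \<tau>) {z \<in> c_completion \<tau>. b \<in> fst z}"
  by (rule openin_sigma_chr_mem) (rule fst_Lchr_subset_LI)

lemma openin_sigma_chr_snd_mem: "openin (sigma_chr \<tau>) {z \<in> c_completion \<tau>. a \<in> snd z}"
  by (rule openin_sigma_chr_mem) (rule snd_Lchr_subset_LI)

section \<open>Indecomposable future sets are generated by past chains\<close>

definition reverse_triangle :: "('a \<Rightarrow> 'a \<Rightarrow> ennreal) \<Rightarrow> bool" where
  "reverse_triangle \<tau> \<longleftrightarrow> (\<forall>x y z. chr \<tau> x y \<longrightarrow> chr \<tau> y z \<longrightarrow> \<tau> x y + \<tau> y z \<le> \<tau> x z)"

lemma reverse_triangle_if_lorentzian_metric_space: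
  "lorentzian_metric_space \<sigma> \<tau> \<Longrightarrow> reverse_triangle \<tau>"
  unfolding lorentzian_metric_space_def reverse_triangle_def chr_def by blast

lemma tau_le_tau_past_start:
  assumes "reverse_triangle \<tau>" "chr \<tau> x y" "chr \<tau> y z"
  shows "\<tau> y z \<le> \<tau> x z"
proof -
  have "\<tau> y z \<le> \<tau> x y + \<tau> y z"
    by (rule add_increasing) simp_all
  also have "\<dots> \<le> \<tau> x z"
    using assms unfolding reverse_triangle_def by blast
  finally show ?thesis .
qed

lemma tau_le_tau_future_end:
  assumes "reverse_triangle \<tau>" "chr \<tau> x y" "chr \<tau> y z"
  shows "\<tau> x y \<le> \<tau> x z"
proof -
  have "\<tau> x y \<le> \<tau> x y + \<tau> y z"
    by (rule add_increasing2) simp_all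
  also have "\<dots> \<le> \<tau> x z"
    using assms unfolding reverse_triangle_def by blast
  finally show ?thesis .
qed

lemma transp_chr: "reverse_triangle \<tau> \<Longrightarrow> transp (chr \<tau>)"
  by (rule transpI) (metis chr_def order_less_le_trans tau_le_tau_future_end)

lemma IfutS_mono: "A \<subseteq> B \<Longrightarrow> IfutS \<tau> A \<subseteq> IfutS \<tau> B"
  unfolding IfutS_def by blast

lemma IfutS_subset_future_set: "future_set \<tau> F \<Longrightarrow> A \<subseteq> F \<Longrightarrow> IfutS \<tau> A \<subseteq> F"
  unfolding future_set_def by (metis IfutS_mono)

lemma future_set_chr_closed:
  "future_set \<tau> F \<Longrightarrow> u \<in> F \<Longrightarrow> chr \<tau> u w \<Longrightarrow> w \<in> F"
  unfolding future_set_def IfutS_def Ifut_def by blast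

lemma future_set_has_past:
  "future_set \<tau> F \<Longrightarrow> w \<in> F \<Longrightarrow> \<exists>u\<in>F. chr \<tau> u w"
  unfolding future_set_def IfutS_def Ifut_def by blast

lemma future_set_IfutS:
  assumes trans: "transp (chr \<tau>)" and sep: "separable_lms \<tau>"
  shows "future_set \<tau> (IfutS \<tau> A)"
  unfolding future_set_def
proof
  show "IfutS \<tau> A \<subseteq> IfutS \<tau> (IfutS \<tau> A)"
  proof
    fix w assume "w \<in> IfutS \<tau> A"
    then obtain a where a: "a \<in> A" "chr \<tau> a w"
      unfolding IfutS_def Ifut_def by blast
    then obtain s where "chr \<tau> a s" "chr \<tau> s w"
      using sep unfolding separable_lms_def by blast
    with a show "w \<in> IfutS \<tau> (IfutS \<tau> A)"
      unfolding IfutS_def Ifut_def by blast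
  qed
  show "IfutS \<tau> (IfutS \<tau> A) \<subseteq> IfutS \<tau> A"
    using transpD[OF trans] unfolding IfutS_def Ifut_def by blast
qed

lemma IF_directed:
  assumes trans: "transp (chr \<tau>)" and sep: "separable_lms \<tau>" and F: "IF \<tau> F"
    and x: "x \<in> F" and y: "y \<in> F"
  shows "\<exists>z\<in>F. chr \<tau> z x \<and> chr \<tau> z y"
  \<comment> \<open>Otherwise \<open>F\<close> splits into the future \<open>A\<close> of its part in the past of \<open>x\<close>, which misses \<open>y\<close>,
    and the future \<open>B\<close> of the rest, which misses \<open>x\<close>.\<close>
proof (rule ccontr)
  assume no_common_past: "\<not> (\<exists>z\<in>F. chr \<tau> z x \<and> chr \<tau> z y)"
  have F_future: "future_set \<tau> F"
    using F unfolding IF_def by blast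
  define A where "A = IfutS \<tau> (F \<inter> Ipast \<tau> x)"
  define B where "B = IfutS \<tau> (F - A)"
  have A_future: "future_set \<tau> A" and B_future: "future_set \<tau> B"
    unfolding A_def B_def using future_set_IfutS[OF trans sep] by blast+
  have "A \<subseteq> F" "B \<subseteq> F"
    unfolding A_def B_def by (auto intro!: IfutS_subset_future_set[OF F_future])
  have "x \<in> A"
    using future_set_has_past[OF F_future x] unfolding A_def IfutS_def Ifut_def Ipast_def by blast
  have "y \<notin> A"
    using no_common_past unfolding A_def IfutS_def Ifut_def Ipast_def by blast
  have "x \<notin> B"
  proof
    assume "x \<in> B"
    then obtain u where u: "u \<in> F" "u \<notin> A" "chr \<tau> u x"
      unfolding B_def IfutS_def Ifut_def by blast
    obtain v where "v \<in> F" "chr \<tau> v u"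
      using future_set_has_past[OF F_future u(1)] by blast
    with u(3) have "u \<in> A"
      using transpD[OF trans] unfolding A_def IfutS_def Ifut_def Ipast_def by blast
    with u(2) show False ..
  qed
  have "F \<subseteq> A \<union> B"
  proof
    fix w assume w: "w \<in> F"
    obtain u where u: "u \<in> F" "chr \<tau> u w"
      using future_set_has_past[OF F_future w] by blast
    show "w \<in> A \<union> B"
    proof (cases "u \<in> A")
      case True
      then show ?thesis
        using future_set_chr_closed[OF A_future _ u(2)] by blast
    next
      case False
      then show ?thesis
        using u unfolding B_def IfutS_def Ifut_def by blast
    qed
  qed
  then show False
    using F A_future B_future \<open>A \<subseteq> F\<close> \<open>B \<subseteq> F\<close> \<open>x \<in> A\<close> \<open>y \<notin> A\<close> \<open>x \<notin> B\<close> x y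
    unfolding IF_def by blast
qed


lemma future_set_countable_dense:
  assumes sep: "separable_lms \<tau>" and F: "future_set \<tau> F"
  obtains D where "countable D" "D \<subseteq> F" "\<And>w. w \<in> F \<Longrightarrow> \<exists>d\<in>D. chr \<tau> d w"
proof -
  obtain S where S: "countable S" "\<And>x y. chr \<tau> x y \<Longrightarrow> \<exists>s\<in>S. chr \<tau> x s \<and> chr \<tau> s y"
    using sep unfolding separable_lms_def by blast
  have "\<exists>d\<in>F \<inter> S. chr \<tau> d w" if w: "w \<in> F" for w
  proof -
    obtain u where "u \<in> F" "chr \<tau> u w"
      using future_set_has_past[OF F w] by blast
    then show ?thesis
      using S(2) future_set_chr_closed[OF F] by blast
  qed
  then show thesis
    using that[of "F \<inter> S"] S(1) by blast
qed

lemma IF_eq_IfutS_past_chain: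
  assumes trans: "transp (chr \<tau>)" and sep: "separable_lms \<tau>" and F: "IF \<tau> F"
  obtains q where "past_chain \<tau> q" "IfutS \<tau> (range q) = F"
proof -
  have F_future: "future_set \<tau> F" and "F \<noteq> {}"
    using F unfolding IF_def by blast+
  obtain D where D: "countable D" "D \<subseteq> F" and dense: "\<And>w. w \<in> F \<Longrightarrow> \<exists>d\<in>D. chr \<tau> d w"
    using future_set_countable_dense[OF sep F_future] by blast
  have "D \<noteq> {}"
    using \<open>F \<noteq> {}\<close> dense by blast
  define e where "e = from_nat_into D"
  have e: "e n \<in> F" for n
    using from_nat_into[OF \<open>D \<noteq> {}\<close>] D(2) unfolding e_def by blast
  have "\<exists>z. z \<in> F \<and> chr \<tau> z (e 0)"
    using future_set_has_past[OF F_future e] by blast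
  moreover have "\<exists>z'. (z' \<in> F \<and> chr \<tau> z' (e (Suc n))) \<and> chr \<tau> z' z"
    if "z \<in> F \<and> chr \<tau> z (e n)" for z n
    using IF_directed[OF trans sep F, of z "e (Suc n)"] that e by blast
  ultimately obtain q where q: "\<And>n. q n \<in> F" "\<And>n. chr \<tau> (q n) (e n)" "past_chain \<tau> q"
    using dependent_nat_choice[where P="\<lambda>n z. z \<in> F \<and> chr \<tau> z (e n)" and Q="\<lambda>n z z'. chr \<tau> z' z"]
    unfolding past_chain_def by blast
  have "F \<subseteq> IfutS \<tau> (range q)"
  proof
    fix w assume "w \<in> F"
    then obtain d where "d \<in> D" "chr \<tau> d w"
      using dense by blast
    moreover obtain n where "d = e n"
      using \<open>d \<in> D\<close> range_from_nat_into[OF \<open>D \<noteq> {}\<close> D(1)] unfolding e_def by blast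
    ultimately have "chr \<tau> (q n) w"
      using q(2) transpD[OF trans] by blast
    then show "w \<in> IfutS \<tau> (range q)"
      unfolding IfutS_def Ifut_def by blast
  qed
  moreover have "IfutS \<tau> (range q) \<subseteq> F"
    using IfutS_subset_future_set[OF F_future] q(1) by blast
  ultimately show thesis
    using q(3) that by blast
qed

section \<open>Time reversal\<close>

definition time_dual :: "('a \<Rightarrow> 'a \<Rightarrow> ennreal) \<Rightarrow> 'a \<Rightarrow> 'a \<Rightarrow> ennreal" where
  "time_dual \<tau> x y = \<tau> y x"

lemma chr_time_dual [simp]: "chr (time_dual \<tau>) x y \<longleftrightarrow> chr \<tau> y x"
  unfolding chr_def time_dual_def ..

lemma IfutS_time_dual: "IfutS (time_dual \<tau>) = IpastS \<tau>"
  unfolding IfutS_def IpastS_def Ifut_def Ipast_def by (auto simp: fun_eq_iff)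

lemma IF_time_dual: "IF (time_dual \<tau>) = IP \<tau>"
  unfolding IF_def IP_def future_set_def past_set_def IfutS_time_dual ..

lemma past_chain_time_dual: "past_chain (time_dual \<tau>) = future_chain \<tau>"
  unfolding past_chain_def future_chain_def by simp

lemma transp_chr_time_dual: "transp (chr \<tau>) \<Longrightarrow> transp (chr (time_dual \<tau>))"
  unfolding transp_def by simp

lemma separable_lms_time_dual:
  assumes "separable_lms \<tau>"
  shows "separable_lms (time_dual \<tau>)"
proof -
  obtain S where S: "countable S" "\<forall>x y. chr \<tau> x y \<longrightarrow> (\<exists>s\<in>S. chr \<tau> x s \<and> chr \<tau> s y)"
    using assms unfolding separable_lms_def by blast
  show ?thesis
    unfolding separable_lms_def chr_time_dual
  proof (intro exI[of _ S] conjI allI impI)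
    fix x y assume "chr \<tau> y x"
    then show "\<exists>s\<in>S. chr \<tau> s x \<and> chr \<tau> y s"
      using S(2) by blast
  qed (fact S(1))
qed

lemma IP_eq_IpastS_future_chain:
  assumes "transp (chr \<tau>)" and "separable_lms \<tau>" and "IP \<tau> P"
  obtains p where "future_chain \<tau> p" "IpastS \<tau> (range p) = P"
  using IF_eq_IfutS_past_chain[OF transp_chr_time_dual separable_lms_time_dual, of \<tau> P] assms
  unfolding IF_time_dual past_chain_time_dual IfutS_time_dual by blast

lemma past_chain_chr_tail:
  assumes "transp (chr \<tau>)" and "past_chain \<tau> q" and "chr \<tau> (q m) a" and "m \<le> k"
  shows "chr \<tau> (q k) a"
  using \<open>m \<le> k\<close>
proof (induction k rule: dec_induct)
  case (step k)
  then show ?case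
    using assms(1,2) unfolding past_chain_def by (blast dest: transpD)
qed (fact assms(3))

lemma future_chain_chr_tail:
  assumes "transp (chr \<tau>)" and "future_chain \<tau> p" and "chr \<tau> b (p m)" and "m \<le> k"
  shows "chr \<tau> b (p k)"
  using past_chain_chr_tail[OF transp_chr_time_dual, of \<tau> p m b k] assms
  unfolding past_chain_time_dual by simp

section \<open>The extended time separation\<close>

lemma incseq_tau_chains:
  assumes rt: "reverse_triangle \<tau>" and q: "past_chain \<tau> q" and p: "future_chain \<tau> p"
  shows "incseq (\<lambda>n. \<tau> (q n) (p n))"
proof (rule incseq_SucI)
  fix n
  show "\<tau> (q n) (p n) \<le> \<tau> (q (Suc n)) (p (Suc n))"
  proof (cases "chr \<tau> (q n) (p n)")
    case True
    have q': "chr \<tau> (q (Suc n)) (q n)" and p': "chr \<tau> (p n) (p (Suc n))"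
      using q p unfolding past_chain_def future_chain_def by blast+
    have "\<tau> (q n) (p n) \<le> \<tau> (q (Suc n)) (p n)"
      using tau_le_tau_past_start[OF rt q' True] .
    also have "\<dots> \<le> \<tau> (q (Suc n)) (p (Suc n))"
      using tau_le_tau_future_end[OF rt transpD[OF transp_chr[OF rt] q' True] p'] .
    finally show ?thesis .
  next
    case False
    then show ?thesis
      by (simp add: chr_def)
  qed
qed

lemma tau_le_SUP_chains:
  assumes rt: "reverse_triangle \<tau>" and q: "past_chain \<tau> q" and p: "future_chain \<tau> p"
    and a: "a \<in> IfutS \<tau> (range q)" and b: "b \<in> IpastS \<tau> (range p)" and ab: "chr \<tau> a b"
  shows "\<tau> a b \<le> (SUP n. \<tau> (q n) (p n))"
proof -
  have trans: "transp (chr \<tau>)"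
    using rt by (rule transp_chr)
  obtain m m' where "chr \<tau> (q m) a" "chr \<tau> b (p m')"
    using a b unfolding IfutS_def Ifut_def IpastS_def Ipast_def by blast
  then have qa: "chr \<tau> (q (max m m')) a" and bp: "chr \<tau> b (p (max m m'))"
    using past_chain_chr_tail[OF trans q] future_chain_chr_tail[OF trans p] by simp_all
  have "\<tau> a b \<le> \<tau> a (p (max m m'))"
    using tau_le_tau_future_end[OF rt ab bp] .
  also have "\<dots> \<le> \<tau> (q (max m m')) (p (max m m'))"
    using tau_le_tau_past_start[OF rt qa transpD[OF trans ab bp]] .
  also have "\<dots> \<le> (SUP n. \<tau> (q n) (p n))"
    by (rule SUP_upper) simp
  finally show ?thesis .
qed

lemma tau_bar_eq_SUP:
  assumes rt: "reverse_triangle \<tau>" and sep: "separable_lms \<tau>" and F: "IF \<tau> F" and P: "IP \<tau> P'"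
  obtains q p where "past_chain \<tau> q" "IfutS \<tau> (range q) = F"
    and "future_chain \<tau> p" "IpastS \<tau> (range p) = P'"
    and "tau_bar \<tau> (P, F) (P', F') = (SUP n. \<tau> (q n) (p n))"
proof -
  have trans: "transp (chr \<tau>)"
    using rt by (rule transp_chr)
  define q where "q = (SOME q. past_chain \<tau> q \<and> IfutS \<tau> (range q) = F)"
  define p where "p = (SOME p. future_chain \<tau> p \<and> IpastS \<tau> (range p) = P')"
  have "\<exists>q. past_chain \<tau> q \<and> IfutS \<tau> (range q) = F"
    by (rule IF_eq_IfutS_past_chain[OF trans sep F]) blast
  then have q: "past_chain \<tau> q \<and> IfutS \<tau> (range q) = F"
    unfolding q_def by (rule someI_ex)
  have "\<exists>p. future_chain \<tau> p \<and> IpastS \<tau> (range p) = P'"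
    by (rule IP_eq_IpastS_future_chain[OF trans sep P]) blast
  then have p: "future_chain \<tau> p \<and> IpastS \<tau> (range p) = P'"
    unfolding p_def by (rule someI_ex)
  have "F \<noteq> {}" "P' \<noteq> {}"
    using F P unfolding IF_def IP_def by blast+
  \<comment> \<open>\<open>lim\<close> is no junk value here: the sequence increases in the complete lattice \<open>ennreal\<close>.\<close>
  then have "tau_bar \<tau> (P, F) (P', F') = lim (\<lambda>n. \<tau> (q n) (p n))"
    unfolding tau_bar_def Let_def q_def p_def by simp
  also have "\<dots> = (SUP n. \<tau> (q n) (p n))"
    using q p by (intro limI LIMSEQ_SUP incseq_tau_chains[OF rt]) simp_all
  finally show thesis
    using that q p by blast
qed

lemma c_completion_IF: "(P, F) \<in> c_completion \<tau> \<Longrightarrow> F \<noteq> {} \<Longrightarrow> IF \<tau> F"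
  unfolding c_completion_def S_rel_def S_rel_ne_def by blast

lemma c_completion_IP: "(P, F) \<in> c_completion \<tau> \<Longrightarrow> P \<noteq> {} \<Longrightarrow> IP \<tau> P"
  unfolding c_completion_def S_rel_def S_rel_ne_def by blast

lemma less_tau_bar_iff:
  assumes rt: "reverse_triangle \<tau>" and sep: "separable_lms \<tau>"
    and x: "x \<in> c_completion \<tau>" and y: "y \<in> c_completion \<tau>"
  shows "t < tau_bar \<tau> x y \<longleftrightarrow> (\<exists>a\<in>snd x. \<exists>b\<in>fst y. t < \<tau> a b)"
proof -
  obtain P F P' F' where xy: "x = (P, F)" "y = (P', F')"
    by fastforce
  show ?thesis
  proof (cases "F = {} \<or> P' = {}")
    case True
    then show ?thesis
      unfolding xy tau_bar_def by auto
  next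
    case False
    then have "IF \<tau> F" "IP \<tau> P'"
      using x y c_completion_IF c_completion_IP unfolding xy by blast+
    then obtain q p where q: "past_chain \<tau> q" "IfutS \<tau> (range q) = F"
      and p: "future_chain \<tau> p" "IpastS \<tau> (range p) = P'"
      and tau_bar_eq: "tau_bar \<tau> (P, F) (P', F') = (SUP n. \<tau> (q n) (p n))"
      using tau_bar_eq_SUP[OF rt sep] by metis
    show ?thesis
    proof
      assume "t < tau_bar \<tau> x y"
      then obtain n where "t < \<tau> (q n) (p n)"
        unfolding xy tau_bar_eq by (auto simp: less_SUP_iff)
      moreover have "q n \<in> F"
        using q unfolding past_chain_def IfutS_def Ifut_def by blast
      moreover have "p n \<in> P'"
        using p unfolding future_chain_def IpastS_def Ipast_def by blast
      ultimately show "\<exists>a\<in>snd x. \<exists>b\<in>fst y. t < \<tau> a b"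
        unfolding xy by auto
    next
      assume "\<exists>a\<in>snd x. \<exists>b\<in>fst y. t < \<tau> a b"
      then obtain a b where "a \<in> F" "b \<in> P'" and t: "t < \<tau> a b"
        unfolding xy by auto
      moreover from t have "chr \<tau> a b"
        unfolding chr_def using le_less_trans zero_le by blast
      ultimately have "\<tau> a b \<le> tau_bar \<tau> x y"
        unfolding xy tau_bar_eq using tau_le_SUP_chains[OF rt q(1) p(1)] q(2) p(2) by blast
      with t show "t < tau_bar \<tau> x y"
        by (rule less_le_trans)
    qed
  qed
qed

theorem mainTheorem18:
  fixes \<sigma> :: "'a topology" and \<tau> :: "'a \<Rightarrow> 'a \<Rightarrow> ennreal"
  assumes "lorentzian_metric_space \<sigma> \<tau>"
    and "separable_lms \<tau>"
    and "chronologically_dense \<sigma> \<tau>"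
    and "S_property \<tau>"
  shows "lsc_on (prod_topology (sigma_chr \<tau>) (sigma_chr \<tau>)) (\<lambda>(x, y). tau_bar \<tau> x y)"
  unfolding lsc_on_def
proof
  fix t :: ennreal
  let ?X = "prod_topology (sigma_chr \<tau>) (sigma_chr \<tau>)"
  let ?U = "\<lambda>a. {z \<in> c_completion \<tau>. a \<in> snd z}" and ?V = "\<lambda>b. {z \<in> c_completion \<tau>. b \<in> fst z}"
  have rt: "reverse_triangle \<tau>"
    using assms(1) by (rule reverse_triangle_if_lorentzian_metric_space)
  have "{z \<in> topspace ?X. t < (case z of (x, y) \<Rightarrow> tau_bar \<tau> x y)}
      = (\<Union>(a, b)\<in>{(a, b). t < \<tau> a b}. ?U a \<times> ?V b)"
    using less_tau_bar_iff[OF rt assms(2)] by (auto simp: topspace_sigma_chr) blast+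
  moreover have "openin ?X (?U a \<times> ?V b)" for a b
    by (simp add: openin_prod_Times_iff openin_sigma_chr_snd_mem openin_sigma_chr_fst_mem)
  ultimately show "openin ?X {z \<in> topspace ?X. t < (case z of (x, y) \<Rightarrow> tau_bar \<tau> x y)}"
    by auto
qed

end
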